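(* Let $(X_r)_{r\ge 0}$ be a discrete time Markov chain on a finite state space $S$ with transition probability matrix $\mathbf{P}$, let $M\subset S$ with $M\neq\emptyset$ and $\overline{M}=S\setminus M\neq\emptyset$, and assume that $\mathbf{I}-\mathbf{P}_M$ and $\mathbf{I}-\mathbf{P}_{\overline{M}}$ are invertible. Then for every integer $m\ge 0$: (a) $\displaystyle M_m(\mathcal{N}_1)=\sum_{j=0}^{m} b_{m,j,1}\,\mathbf{P}_M^{j}\,(\mathbf{I}-\mathbf{P}_M)^{-j-1}\,\mathbf{P}_{M\overline{M}}$; (b) $\displaystyle M_m(\mathcal{R}_1)=\mathbf{P}_M+\mathbf{P}_{M\overline{M}}\sum_{j=0}^{m} b_{m,j,2}\,\mathbf{P}_{\overline{M}}^{j}\,(\mathbf{I}-\mathbf{P}_{\overline{M}})^{-j-1}\,\mathbf{P}_{\overline{M}M}$.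
   Context: Moment generating Stirling numbers: for integers $i\ge0$, $j\ge0$ and real $k$, $b_{i,j,k}=\sum_{r=0}^{j}\binom{j}{r}(-1)^{j-r}(r+k)^i$, with the convention $0^0=1$. Block notation: $\mathbf{P}_M=(p_{ij})_{i,j\in M}$, $\mathbf{P}_{M\overline{M}}=(p_{ij})_{i\in M,j\in\overline{M}}$, $\mathbf{P}_{\overline{M}M}=(p_{ij})_{i\in\overline{M},j\in M}$, $\mathbf{P}_{\overline{M}}=(p_{ij})_{i,j\in\overline{M}}$. Passage and recurrence times (matrix valued): for $i\in M$, let $\tau^{N}=\min\{r\ge1: \#\{1\le t\le r: X_t\in\overline{M}\}=1\}$ and $\tau^{R}=\min\{r\ge1:\#\{1\le t\le r: X_t\in M\}=1\}$. For $n\ge0$, $P(\mathcal{N}_1=n)$ is the $|M|\times|\overline{M}|$ matrix with $(i,j)$ entry $P(\tau^N=n,\,X_n=j\mid X_0=i)$ ($i\in M$, $j\in\overline{M}$), and $P(\mathcal{R}_1=n)$ is the $|M|\times|M|$ matrix with $(i,j)$ entry $P(\tau^R=n,\,X_n=j\mid X_0=i)$ ($i,j\in M$). Moments: for a matrix random variable $\mathcal{Y}$ of this kind, $M_m(\mathcal{Y})=\sum_{n=0}^{\infty} n^m P(\mathcal{Y}=n)$ (entrywise), with $0^0=1$. *)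

theory Defs
  imports Complex_Main
begin

text \<open>Moment generating Stirling numbers b_{i,j,k} (with 0^0 = 1, as for real powers).\<close>
definition mgs :: "nat \<Rightarrow> nat \<Rightarrow> real \<Rightarrow> real" where
  "mgs i j k = (\<Sum>r = 0..j. real (j choose r) * (-1) ^ (j - r) * (real r + k) ^ i)"

text \<open>Matrices indexed by the state space 's are functions 's => 's => real.
  Block matrices P_K are handled by contracting products over the index set K.\<close>
definition blk_mult :: "'s set \<Rightarrow> ('s \<Rightarrow> 's \<Rightarrow> real) \<Rightarrow> ('s \<Rightarrow> 's \<Rightarrow> real) \<Rightarrow> ('s \<Rightarrow> 's \<Rightarrow> real)" where
  "blk_mult K A B = (\<lambda>i j. \<Sum>k\<in>K. A i k * B k j)"

definition idm :: "'s \<Rightarrow> 's \<Rightarrow> real" where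
  "idm = (\<lambda>i j. if i = j then 1 else 0)"

fun blk_pow :: "'s set \<Rightarrow> ('s \<Rightarrow> 's \<Rightarrow> real) \<Rightarrow> nat \<Rightarrow> ('s \<Rightarrow> 's \<Rightarrow> real)" where
  "blk_pow K A 0 = idm"
| "blk_pow K A (Suc n) = blk_mult K A (blk_pow K A n)"

definition blk_is_inv :: "'s set \<Rightarrow> ('s \<Rightarrow> 's \<Rightarrow> real) \<Rightarrow> ('s \<Rightarrow> 's \<Rightarrow> real) \<Rightarrow> bool" where
  "blk_is_inv K A B \<longleftrightarrow> (\<forall>i\<in>K. \<forall>j\<in>K. blk_mult K A B i j = idm i j \<and> blk_mult K B A i j = idm i j)"

definition blk_invertible :: "'s set \<Rightarrow> ('s \<Rightarrow> 's \<Rightarrow> real) \<Rightarrow> bool" where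
  "blk_invertible K A \<longleftrightarrow> (\<exists>B. blk_is_inv K A B)"

definition blk_inv :: "'s set \<Rightarrow> ('s \<Rightarrow> 's \<Rightarrow> real) \<Rightarrow> ('s \<Rightarrow> 's \<Rightarrow> real)" where
  "blk_inv K A = (SOME B. blk_is_inv K A B)"

definition I_minus :: "('s \<Rightarrow> 's \<Rightarrow> real) \<Rightarrow> ('s \<Rightarrow> 's \<Rightarrow> real)" where
  "I_minus P = (\<lambda>i j. idm i j - P i j)"

definition stochastic :: "('s::finite \<Rightarrow> 's \<Rightarrow> real) \<Rightarrow> bool" where
  "stochastic P \<longleftrightarrow> (\<forall>i j. 0 \<le> P i j) \<and> (\<forall>i. (\<Sum>j\<in>UNIV. P i j) = 1)"

text \<open>A path X_1..X_n given X_0 = i is the list xs (length n); X_t = (i # xs) ! t.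
  Its probability under the Markov chain with transition matrix P.\<close>
definition path_prob :: "('s \<Rightarrow> 's \<Rightarrow> real) \<Rightarrow> 's \<Rightarrow> 's list \<Rightarrow> real" where
  "path_prob P i xs = (\<Prod>t<length xs. P ((i # xs) ! t) ((i # xs) ! Suc t))"

definition visits :: "'s set \<Rightarrow> 's \<Rightarrow> 's list \<Rightarrow> nat \<Rightarrow> nat" where
  "visits A i xs r = card {t \<in> {1..r}. (i # xs) ! t \<in> A}"

text \<open>The event tau = n, where tau = min{r >= 1 : #{1<=t<=r : X_t in A} = 1},
  evaluated on the path X_0..X_n (it only depends on this prefix).\<close>
definition tau_eq :: "'s set \<Rightarrow> 's \<Rightarrow> 's list \<Rightarrow> nat \<Rightarrow> bool" where
  "tau_eq A i xs n \<longleftrightarrow> 1 \<le> n \<and> visits A i xs n = 1 \<and> (\<forall>r. 1 \<le> r \<and> r < n \<longrightarrow> visits A i xs r \<noteq> 1)"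

text \<open>P(tau = n, X_n = j | X_0 = i) for tau the first-count time of A.
  tau^N corresponds to A = complement of M, tau^R to A = M.\<close>
definition first_prob :: "('s::finite \<Rightarrow> 's \<Rightarrow> real) \<Rightarrow> 's set \<Rightarrow> 's \<Rightarrow> 's \<Rightarrow> nat \<Rightarrow> real" where
  "first_prob P A i j n = (\<Sum>xs\<in>{xs. length xs = n}.
      (if tau_eq A i xs n \<and> (i # xs) ! n = j then path_prob P i xs else 0))"

end

theory Submission
  imports Defs
begin

text \<open>
  Let \<open>K\<close> be the complement of the target set. A first entrance at time \<open>n + 1\<close> stays in \<open>K\<close>
  for \<open>n\<close> steps and then leaves it, so its probability is an entry of \<open>P_K^n P_{K,-K}\<close> and the
  shifted moments are \<open>\<Sum>_n (n + c)^m P_K^n P_{K,-K}\<close>. Newton's forward difference formula gives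
  \<open>(n + c)^m = \<Sum>_k b_{m,k,c} (n choose k)\<close>, and \<open>\<Sum>_n (n choose k) P_K^n = P_K^k (I - P_K)^(-k-1)\<close>:
  the row sums of the substochastic powers \<open>P_K^n\<close> decrease to a fixed point of \<open>P_K\<close>, which
  vanishes because \<open>I - P_K\<close> is invertible, so they decay geometrically and the series converge;
  by Pascal's rule their sums solve linear systems \<open>x = y + P_K x\<close>, which determine them.
  Part (a) is the case \<open>c = 1\<close>. For (b) the chain either enters \<open>M\<close> at once or first steps into
  the complement, which reduces (b) to the case \<open>c = 2\<close>.
\<close>

lemma blk_mult_assoc: "blk_mult K (blk_mult K X Y) Z = blk_mult K X (blk_mult K Y Z)"
  unfolding blk_mult_def
  by (rule ext)+ (simp add: sum_distrib_left sum_distrib_right mult.assoc, rule sum.swap)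

lemma blk_mult_cong:
  "(\<And>k. k \<in> K \<Longrightarrow> X i k = X' i k) \<Longrightarrow> (\<And>k. k \<in> K \<Longrightarrow> Y k j = Y' k j)
    \<Longrightarrow> blk_mult K X Y i j = blk_mult K X' Y' i j"
  unfolding blk_mult_def by (auto intro!: sum.cong)

lemma sum_idm_mult: "finite K \<Longrightarrow> i \<in> K \<Longrightarrow> (\<Sum>k\<in>K. idm i k * f k) = f i"
  by (simp add: idm_def if_distrib[of "\<lambda>x. x * _"] cong: if_cong)

lemma sum_mult_idm: "finite K \<Longrightarrow> j \<in> K \<Longrightarrow> (\<Sum>k\<in>K. f k * idm k j) = f j"
  by (simp add: idm_def if_distrib[of "\<lambda>x. _ * x"] cong: if_cong)

lemma blk_mult_idm_left: "finite K \<Longrightarrow> i \<in> K \<Longrightarrow> blk_mult K idm Y i j = Y i j"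
  unfolding blk_mult_def by (rule sum_idm_mult)

lemma blk_mult_idm_right: "finite K \<Longrightarrow> j \<in> K \<Longrightarrow> blk_mult K X idm i j = X i j"
  unfolding blk_mult_def by (rule sum_mult_idm)

lemma blk_pow_add:
  assumes "finite K" and "i \<in> K"
  shows "blk_pow K X (a + b) i j = blk_mult K (blk_pow K X a) (blk_pow K X b) i j"
  using assms(2)
proof (induction a arbitrary: i)
  case 0
  then show ?case using assms(1) by (simp add: blk_mult_idm_left)
next
  case (Suc a)
  have "blk_pow K X (Suc a + b) i j = blk_mult K X (blk_pow K X (a + b)) i j"
    by simp
  also have "\<dots> = blk_mult K X (blk_mult K (blk_pow K X a) (blk_pow K X b)) i j"
    by (rule blk_mult_cong) (use Suc in auto)
  also have "\<dots> = blk_mult K (blk_pow K X (Suc a)) (blk_pow K X b) i j"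
    by (simp add: blk_mult_assoc)
  finally show ?case .
qed

lemma sum_I_minus_mult:
  "finite K \<Longrightarrow> i \<in> K \<Longrightarrow> (\<Sum>k\<in>K. I_minus A i k * x k) = x i - (\<Sum>k\<in>K. A i k * x k)"
  unfolding I_minus_def by (simp add: left_diff_distrib sum_subtractf sum_idm_mult)

lemma blk_mult_I_minus_left:
  "finite K \<Longrightarrow> i \<in> K \<Longrightarrow> blk_mult K (I_minus A) X i j = X i j - blk_mult K A X i j"
  unfolding blk_mult_def by (rule sum_I_minus_mult)

lemma blk_mult_I_minus_right:
  "finite K \<Longrightarrow> j \<in> K \<Longrightarrow> blk_mult K X (I_minus A) i j = X i j - blk_mult K X A i j"
  unfolding I_minus_def blk_mult_def
  by (simp add: right_diff_distrib sum_subtractf sum_mult_idm)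

lemma blk_is_inv_blk_inv:
  assumes "blk_invertible K A"
  shows "blk_is_inv K A (blk_inv K A)"
  using assms unfolding blk_invertible_def blk_inv_def by (rule someI_ex)

lemma blk_is_inv_fixed_point:
  assumes fin: "finite K" and inv: "blk_is_inv K (I_minus A) R" and i: "i \<in> K"
    and fix_pt: "\<And>i. i \<in> K \<Longrightarrow> x i = y i + (\<Sum>k\<in>K. A i k * x k)"
  shows "x i = (\<Sum>k\<in>K. R i k * y k)"
proof -
  have "(\<Sum>k\<in>K. R i k * y k) = (\<Sum>k\<in>K. R i k * (\<Sum>l\<in>K. I_minus A k l * x l))"
    using fix_pt by (simp add: sum_I_minus_mult[OF fin])
  also have "\<dots> = (\<Sum>l\<in>K. blk_mult K R (I_minus A) i l * x l)"
    unfolding blk_mult_def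
    by (simp add: sum_distrib_left sum_distrib_right mult.assoc, rule sum.swap)
  also have "\<dots> = (\<Sum>l\<in>K. idm i l * x l)"
    using inv i unfolding blk_is_inv_def by (intro sum.cong) auto
  also have "\<dots> = x i"
    using fin i by (rule sum_idm_mult)
  finally show ?thesis by simp
qed

lemma blk_inv_commute:
  assumes fin: "finite K" and inv: "blk_is_inv K (I_minus A) R" and i: "i \<in> K" and j: "j \<in> K"
  shows "blk_mult K R A i j = blk_mult K A R i j"
  using inv i j blk_mult_I_minus_right[OF fin j, of R A i] blk_mult_I_minus_left[OF fin i, of A R j]
  unfolding blk_is_inv_def by simp

lemma blk_inv_commute_pow:
  assumes fin: "finite K" and inv: "blk_is_inv K (I_minus A) R" and "i \<in> K" and "j \<in> K"
  shows "blk_mult K R (blk_pow K A n) i j = blk_mult K (blk_pow K A n) R i j"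
  using assms(3,4)
proof (induction n arbitrary: i j)
  case 0
  then show ?case using fin by (simp add: blk_mult_idm_left blk_mult_idm_right)
next
  case (Suc n)
  have "blk_mult K R (blk_pow K A (Suc n)) i j = blk_mult K (blk_mult K R A) (blk_pow K A n) i j"
    by (simp add: blk_mult_assoc)
  also have "\<dots> = blk_mult K (blk_mult K A R) (blk_pow K A n) i j"
    by (rule blk_mult_cong) (use blk_inv_commute[OF fin inv] Suc.prems in auto)
  also have "\<dots> = blk_mult K A (blk_mult K R (blk_pow K A n)) i j"
    by (simp add: blk_mult_assoc)
  also have "\<dots> = blk_mult K A (blk_mult K (blk_pow K A n) R) i j"
    by (rule blk_mult_cong) (use Suc in auto)
  also have "\<dots> = blk_mult K (blk_pow K A (Suc n)) R i j"
    by (simp add: blk_mult_assoc)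
  finally show ?case .
qed

lemma blk_inv_mult_blk_pow_Suc:
  assumes "finite K" and "blk_is_inv K (I_minus A) R" and "i \<in> K" and "j \<in> K"
  shows "blk_mult K R (blk_mult K A (blk_mult K (blk_pow K A n) (blk_pow K R (Suc n)))) i j
       = blk_mult K (blk_pow K A (Suc n)) (blk_pow K R (Suc (Suc n))) i j"
proof -
  have "blk_mult K R (blk_mult K A (blk_mult K (blk_pow K A n) (blk_pow K R (Suc n)))) i j
      = blk_mult K (blk_mult K R (blk_pow K A (Suc n))) (blk_pow K R (Suc n)) i j"
    by (simp add: blk_mult_assoc)
  also have "\<dots> = blk_mult K (blk_mult K (blk_pow K A (Suc n)) R) (blk_pow K R (Suc n)) i j"
    by (rule blk_mult_cong) (use blk_inv_commute_pow[OF assms(1-3), of _ "Suc n"] in auto)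
  also have "\<dots> = blk_mult K (blk_pow K A (Suc n)) (blk_pow K R (Suc (Suc n))) i j"
    by (simp add: blk_mult_assoc)
  finally show ?thesis .
qed

section \<open>Forward differences and the numbers \<open>b\<^sub>i\<^sub>,\<^sub>j\<^sub>,\<^sub>k\<close>\<close>

fun fwd_diff :: "nat \<Rightarrow> (real \<Rightarrow> real) \<Rightarrow> real \<Rightarrow> real" where
  "fwd_diff 0 f x = f x"
| "fwd_diff (Suc j) f x = fwd_diff j f (x + 1) - fwd_diff j f x"

lemma sum_choose_Suc:
  fixes a :: "nat \<Rightarrow> real"
  shows "(\<Sum>r\<le>Suc j. real (Suc j choose r) * a r)
       = (\<Sum>r\<le>j. real (j choose r) * a r) + (\<Sum>r\<le>j. real (j choose r) * a (Suc r))"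
proof -
  have "(\<Sum>r\<le>Suc j. real (Suc j choose r) * a r)
      = a 0 + (\<Sum>r\<le>j. real (j choose r) * a (Suc r)) + (\<Sum>r\<le>j. real (j choose Suc r) * a (Suc r))"
    by (subst sum.atMost_Suc_shift) (simp add: distrib_right sum.distrib)
  moreover have "(\<Sum>r\<le>Suc j. real (j choose r) * a r) = a 0 + (\<Sum>r\<le>j. real (j choose Suc r) * a (Suc r))"
    by (subst sum.atMost_Suc_shift) simp
  moreover have "(\<Sum>r\<le>Suc j. real (j choose r) * a r) = (\<Sum>r\<le>j. real (j choose r) * a r)"
    by simp
  ultimately show ?thesis by simp
qed

lemma newton_forward_difference: "f (x + real n) = (\<Sum>j\<le>n. real (n choose j) * fwd_diff j f x)"
proof (induction n arbitrary: x)
  case 0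
  then show ?case by simp
next
  case (Suc n)
  have "f (x + real (Suc n)) = f ((x + 1) + real n)"
    by (simp add: algebra_simps)
  also have "\<dots> = (\<Sum>j\<le>n. real (n choose j) * fwd_diff j f (x + 1))"
    by (rule Suc.IH)
  also have "\<dots> = (\<Sum>j\<le>n. real (n choose j) * fwd_diff j f x)
                + (\<Sum>j\<le>n. real (n choose j) * fwd_diff (Suc j) f x)"
    by (simp add: right_diff_distrib sum_subtractf)
  also have "\<dots> = (\<Sum>j\<le>Suc n. real (Suc n choose j) * fwd_diff j f x)"
    by (rule sum_choose_Suc[symmetric])
  finally show ?case .
qed

lemma fwd_diff_sum:
  "finite S \<Longrightarrow> fwd_diff j (\<lambda>y. \<Sum>k\<in>S. a k * g k y) x = (\<Sum>k\<in>S. a k * fwd_diff j (g k) x)"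
  by (induction j arbitrary: x) (simp_all add: sum_subtractf right_diff_distrib)

lemma fwd_diff_Suc': "fwd_diff (Suc j) f x = fwd_diff j (\<lambda>y. f (y + 1) - f y) x"
proof (induction j arbitrary: x)
  case 0
  then show ?case by simp
next
  case (Suc j)
  have "fwd_diff (Suc (Suc j)) f x = fwd_diff (Suc j) f (x + 1) - fwd_diff (Suc j) f x"
    by (rule fwd_diff.simps(2))
  also have "\<dots> = fwd_diff j (\<lambda>y. f (y + 1) - f y) (x + 1) - fwd_diff j (\<lambda>y. f (y + 1) - f y) x"
    by (simp only: Suc.IH)
  also have "\<dots> = fwd_diff (Suc j) (\<lambda>y. f (y + 1) - f y) x"
    by (rule fwd_diff.simps(2)[symmetric])
  finally show ?case .
qed

lemma fwd_diff_power_eq_0: "i < j \<Longrightarrow> fwd_diff j (\<lambda>y. (y + c) ^ i) x = 0"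
proof (induction i arbitrary: j x rule: less_induct)
  case (less i)
  obtain j' where j: "j = Suc j'"
    using less.prems by (cases j) auto
  have diff: "(\<lambda>y. (y + 1 + c) ^ i - (y + c) ^ i) = (\<lambda>y. \<Sum>k<i. real (i choose k) * (y + c) ^ k)"
  proof
    fix y :: real
    have "(y + c + 1) ^ i = (\<Sum>k\<le>i. real (i choose k) * (y + c) ^ k)"
      using binomial_ring[of "y + c" 1 i] by (simp add: mult.commute)
    also have "\<dots> = (\<Sum>k<i. real (i choose k) * (y + c) ^ k) + (y + c) ^ i"
      by (simp add: lessThan_Suc_atMost[symmetric])
    finally show "(y + 1 + c) ^ i - (y + c) ^ i = (\<Sum>k<i. real (i choose k) * (y + c) ^ k)"
      by (simp add: algebra_simps)
  qed
  have "fwd_diff j (\<lambda>y. (y + c) ^ i) x = fwd_diff j' (\<lambda>y. (y + 1 + c) ^ i - (y + c) ^ i) x"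
    unfolding j fwd_diff_Suc' by (simp add: ac_simps)
  also have "\<dots> = (\<Sum>k<i. real (i choose k) * fwd_diff j' (\<lambda>y. (y + c) ^ k) x)"
    unfolding diff by (rule fwd_diff_sum) simp
  also have "\<dots> = 0"
    using less.prems j by (intro sum.neutral ballI) (simp add: less.IH)
  finally show ?case .
qed

lemma fwd_diff_closed_form:
  "fwd_diff j f x = (-1) ^ j * (\<Sum>r\<le>j. real (j choose r) * ((-1) ^ r * f (x + real r)))"
proof (induction j arbitrary: x)
  case 0
  then show ?case by simp
next
  case (Suc j)
  let ?a = "\<lambda>r. (-1::real) ^ r * f (x + real r)"
  define V where "V = (\<Sum>r\<le>j. real (j choose r) * ((-1) ^ r * f (x + real r)))"
  define U where "U = (\<Sum>r\<le>j. real (j choose r) * ((-1) ^ r * f (x + 1 + real r)))"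
  have shifted: "(\<Sum>r\<le>j. real (j choose r) * ?a (Suc r)) = - U"
    unfolding U_def sum_negf[symmetric] by (rule sum.cong) (simp_all add: algebra_simps)
  have sum_eq: "(\<Sum>r\<le>Suc j. real (Suc j choose r) * ?a r) = V - U"
    using sum_choose_Suc[of j ?a] shifted unfolding V_def by simp
  have diff_eq: "fwd_diff (Suc j) f x = (-1) ^ j * U - (-1) ^ j * V"
    unfolding U_def V_def using Suc.IH[of x] Suc.IH[of "x + 1"] by simp
  show ?case
    unfolding diff_eq sum_eq by (simp add: algebra_simps)
qed

lemma minus_one_power_diff: "r \<le> j \<Longrightarrow> (-1::real) ^ (j - r) = (-1) ^ j * (-1) ^ r"
  by (simp add: power_diff minus_one_power_iff)

lemma mgs_eq_fwd_diff: "mgs m j c = fwd_diff j (\<lambda>y. (y + c) ^ m) 0"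
  unfolding mgs_def fwd_diff_closed_form atLeast0AtMost
  by (simp add: sum_distrib_left, rule sum.cong, simp_all add: minus_one_power_diff)

lemma power_eq_sum_mgs_choose: "(real n + c) ^ m = (\<Sum>k = 0..m. mgs m k c * real (n choose k))"
proof -
  let ?f = "\<lambda>y. (y + c) ^ m"
  have "(real n + c) ^ m = (\<Sum>j\<le>n. real (n choose j) * fwd_diff j ?f 0)"
    using newton_forward_difference[of ?f 0 n] by simp
  also have "\<dots> = (\<Sum>j\<le>max n m. real (n choose j) * fwd_diff j ?f 0)"
    by (rule sum.mono_neutral_left) auto
  also have "\<dots> = (\<Sum>j\<le>m. real (n choose j) * fwd_diff j ?f 0)"
    by (rule sum.mono_neutral_right) (auto simp: fwd_diff_power_eq_0)
  finally show ?thesis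
    by (simp add: mgs_eq_fwd_diff atLeast0AtMost mult.commute)
qed

section \<open>Geometric decay of substochastic blocks\<close>

definition substochastic_on :: "'s set \<Rightarrow> ('s \<Rightarrow> 's \<Rightarrow> real) \<Rightarrow> bool" where
  "substochastic_on K P \<longleftrightarrow> (\<forall>i j. 0 \<le> P i j) \<and> (\<forall>i\<in>K. (\<Sum>j\<in>K. P i j) \<le> 1)"

lemma stochastic_imp_substochastic_on:
  assumes "stochastic P"
  shows "substochastic_on K P"
proof -
  have "(\<Sum>j\<in>K. P i j) \<le> (\<Sum>j\<in>UNIV. P i j)" for i
    using assms unfolding stochastic_def by (intro sum_mono2) auto
  then show ?thesis
    using assms unfolding stochastic_def substochastic_on_def by simp
qed

lemma blk_pow_nonneg: "(\<And>i j. 0 \<le> P i j) \<Longrightarrow> 0 \<le> blk_pow K P n i j"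
  by (induction n arbitrary: i j) (auto simp: idm_def blk_mult_def intro!: sum_nonneg)

lemma blk_pow_row_sum_Suc:
  "(\<Sum>l\<in>K. blk_pow K P (Suc n) i l) = (\<Sum>k\<in>K. P i k * (\<Sum>l\<in>K. blk_pow K P n k l))"
  by (simp add: blk_mult_def sum_distrib_left) (rule sum.swap)

lemma blk_pow_row_sum_decreasing:
  assumes fin: "finite K" and sub: "substochastic_on K P" and "i \<in> K"
  shows "(\<Sum>l\<in>K. blk_pow K P (Suc n) i l) \<le> (\<Sum>l\<in>K. blk_pow K P n i l)"
  using assms(3)
proof (induction n arbitrary: i)
  case 0
  have "(\<Sum>l\<in>K. blk_pow K P (Suc 0) i l) = (\<Sum>k\<in>K. P i k)"
    unfolding blk_pow_row_sum_Suc using fin by (intro sum.cong) (simp_all add: idm_def)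
  also have "\<dots> \<le> 1"
    using sub 0 unfolding substochastic_on_def by simp
  finally show ?case
    using fin 0 by (simp add: idm_def)
next
  case (Suc n)
  have "\<And>i j. 0 \<le> P i j"
    using sub unfolding substochastic_on_def by simp
  then have "(\<Sum>k\<in>K. P i k * (\<Sum>l\<in>K. blk_pow K P (Suc n) k l))
      \<le> (\<Sum>k\<in>K. P i k * (\<Sum>l\<in>K. blk_pow K P n k l))"
    by (intro sum_mono mult_left_mono Suc.IH)
  then show ?case
    by (simp only: blk_pow_row_sum_Suc[of K P "Suc n"] blk_pow_row_sum_Suc[of K P n])
qed

lemma blk_pow_row_sum_LIMSEQ_0:
  assumes fin: "finite K" and sub: "substochastic_on K P"
    and inv: "blk_is_inv K (I_minus P) R" and i: "i \<in> K"
  shows "(\<lambda>n. \<Sum>l\<in>K. blk_pow K P n i l) \<longlonglongrightarrow> 0"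
proof -
  define h where "h n k = (\<Sum>l\<in>K. blk_pow K P n k l)" for n k
  define L where "L k = lim (\<lambda>n. h n k)" for k
  have nonneg: "\<And>i j. 0 \<le> P i j"
    using sub unfolding substochastic_on_def by simp
  have lim: "(\<lambda>n. h n k) \<longlonglongrightarrow> L k" if "k \<in> K" for k
  proof -
    have "decseq (\<lambda>n. h n k)"
      unfolding h_def using blk_pow_row_sum_decreasing[OF fin sub that] by (rule decseq_SucI)
    moreover have "\<forall>n. 0 \<le> h n k"
      unfolding h_def by (auto intro!: sum_nonneg blk_pow_nonneg nonneg)
    ultimately show ?thesis
      unfolding L_def using decseq_convergent by (metis limI)
  qed
  have "L k = 0 + (\<Sum>k'\<in>K. P k k' * L k')" if "k \<in> K" for k
  proof -
    have "(\<lambda>n. h (Suc n) k) \<longlonglongrightarrow> (\<Sum>k'\<in>K. P k k' * L k')"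
      unfolding h_def blk_pow_row_sum_Suc
      by (intro tendsto_sum tendsto_mult tendsto_const lim[unfolded h_def])
    then show ?thesis
      using LIMSEQ_unique LIMSEQ_Suc[OF lim[OF that]] by simp
  qed
  then have "L i = (\<Sum>k\<in>K. R i k * 0)"
    by (rule blk_is_inv_fixed_point[OF fin inv i])
  then show ?thesis
    using lim[OF i] unfolding h_def by simp
qed

lemma blk_pow_row_sum_add_le:
  assumes fin: "finite K" and nonneg: "\<And>i j. 0 \<le> P i j" and i: "i \<in> K"
    and bound: "\<And>k. k \<in> K \<Longrightarrow> (\<Sum>l\<in>K. blk_pow K P b k l) \<le> \<beta>"
  shows "(\<Sum>l\<in>K. blk_pow K P (a + b) i l) \<le> (\<Sum>l\<in>K. blk_pow K P a i l) * \<beta>"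
proof -
  have "(\<Sum>l\<in>K. blk_pow K P (a + b) i l) = (\<Sum>l\<in>K. blk_mult K (blk_pow K P a) (blk_pow K P b) i l)"
    using blk_pow_add[OF fin i] by simp
  also have "\<dots> = (\<Sum>k\<in>K. blk_pow K P a i k * (\<Sum>l\<in>K. blk_pow K P b k l))"
    unfolding blk_mult_def by (simp add: sum_distrib_left, rule sum.swap)
  also have "\<dots> \<le> (\<Sum>k\<in>K. blk_pow K P a i k * \<beta>)"
    by (intro sum_mono mult_left_mono bound blk_pow_nonneg nonneg)
  also have "\<dots> = (\<Sum>l\<in>K. blk_pow K P a i l) * \<beta>"
    by (simp add: sum_distrib_right)
  finally show ?thesis .
qed

lemma blk_pow_row_sum_le_half_power:
  assumes fin: "finite K" and nonneg: "\<And>i j. 0 \<le> P i j" and "k \<in> K"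
    and half: "\<And>k. k \<in> K \<Longrightarrow> (\<Sum>l\<in>K. blk_pow K P N k l) \<le> 1/2"
  shows "(\<Sum>l\<in>K. blk_pow K P (q * N) k l) \<le> (1/2) ^ q"
  using assms(3)
proof (induction q arbitrary: k)
  case 0
  then show ?case using fin by (simp add: idm_def)
next
  case (Suc q)
  have "(\<Sum>l\<in>K. blk_pow K P (q * N + N) k l) \<le> (\<Sum>l\<in>K. blk_pow K P (q * N) k l) * (1/2)"
    by (rule blk_pow_row_sum_add_le[OF fin nonneg Suc.prems half])
  also have "\<dots> \<le> (1/2) ^ q * (1/2)"
    by (intro mult_right_mono Suc.IH Suc.prems) auto
  finally show ?case
    by (simp add: add.commute)
qed

lemma decseq_le_geometric:
  fixes f :: "nat \<Rightarrow> real"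
  assumes dec: "decseq f" and N: "0 < N" and bound: "\<And>q. f (q * N) \<le> (1/2) ^ q"
  shows "f n \<le> 2 * root N (1/2) ^ n"
proof -
  define q where "q = n div N"
  have "n = N * q + n mod N"
    unfolding q_def by simp
  then have "n \<le> N * Suc q"
    using mod_less_divisor[OF N, of n] by simp
  have "f n \<le> f (q * N)"
    using dec by (rule decseqD) (simp add: q_def)
  also have "\<dots> \<le> 2 * (1/2) ^ Suc q"
    using bound[of q] by simp
  also have "\<dots> = 2 * (root N (1/2) ^ N) ^ Suc q"
    using N by simp
  also have "\<dots> = 2 * root N (1/2) ^ (N * Suc q)"
    by (simp only: power_mult)
  also have "\<dots> \<le> 2 * root N (1/2) ^ n"
    using N \<open>n \<le> N * Suc q\<close> by (simp add: power_decreasing)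
  finally show ?thesis .
qed

lemma blk_pow_geometric_bound:
  assumes fin: "finite K" and sub: "substochastic_on K P" and inv: "blk_is_inv K (I_minus P) R"
  obtains \<theta> where "0 \<le> \<theta>" and "\<theta> < 1"
    and "\<And>n i l. i \<in> K \<Longrightarrow> l \<in> K \<Longrightarrow> blk_pow K P n i l \<le> 2 * \<theta> ^ n"
proof -
  define h where "h n k = (\<Sum>l\<in>K. blk_pow K P n k l)" for n k
  have nonneg: "\<And>i j. 0 \<le> P i j"
    using sub unfolding substochastic_on_def by simp
  have "\<forall>\<^sub>F n in sequentially. h n k < 1/2" if "k \<in> K" for k
    using order_tendstoD(2)[OF blk_pow_row_sum_LIMSEQ_0[OF fin sub inv that], of "1/2"]
    unfolding h_def by simp
  then have "\<forall>\<^sub>F n in sequentially. \<forall>k\<in>K. h n k < 1/2"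
    using fin by (intro eventually_ball_finite) auto
  then obtain N0 where N0: "\<And>n k. n \<ge> N0 \<Longrightarrow> k \<in> K \<Longrightarrow> h n k < 1/2"
    unfolding eventually_sequentially by blast
  define N where "N = Suc N0"
  have halving: "h (q * N) k \<le> (1/2) ^ q" if "k \<in> K" for q k
    unfolding h_def using N0[of N] that
    by (intro blk_pow_row_sum_le_half_power[OF fin nonneg]) (auto simp: N_def h_def less_imp_le)
  show ?thesis
  proof
    show "0 \<le> root N (1/2)" and "root N (1/2) < 1"
      by (simp_all add: N_def)
    fix n i l assume i: "i \<in> K" and l: "l \<in> K"
    have "decseq (\<lambda>n. h n i)"
      unfolding h_def using blk_pow_row_sum_decreasing[OF fin sub i] by (rule decseq_SucI)
    then have "h n i \<le> 2 * root N (1/2) ^ n"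
      by (rule decseq_le_geometric) (use halving[OF i] in \<open>simp_all add: N_def\<close>)
    moreover have "blk_pow K P n i l \<le> h n i"
      unfolding h_def using fin l by (intro member_le_sum blk_pow_nonneg nonneg)
    ultimately show "blk_pow K P n i l \<le> 2 * root N (1/2) ^ n"
      by linarith
  qed
qed

section \<open>The series \<open>\<Sum>\<^sub>n (n choose j) P\<^sub>K\<^sup>n\<close>\<close>

lemma summable_poly_times_geometric:
  fixes \<theta> :: real
  assumes "0 \<le> \<theta>" and "\<theta> < 1"
  shows "summable (\<lambda>n. real n ^ j * \<theta> ^ n)"
  using assms
proof (induction j arbitrary: \<theta>)
  case 0
  then show ?case by (simp add: summable_geometric)
next
  case (Suc j)
  define x where "x = (1 + \<theta>) / 2"
  have x: "\<theta> < x" "x < 1" "0 < x"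
    using Suc.prems by (auto simp: x_def)
  have "norm (\<theta> / x) < 1"
    using x Suc.prems by (simp add: abs_if field_simps)
  then have "(\<lambda>n. of_nat n * (\<theta> / x) ^ n) \<longlonglongrightarrow> (0::real)"
    by (rule powser_times_n_limit_0)
  then obtain N where N: "\<And>n. n \<ge> N \<Longrightarrow> real n * (\<theta> / x) ^ n < 1"
    using LIMSEQ_D[of _ 0 1] Suc.prems x by fastforce
  show ?case
  proof (rule summable_comparison_test')
    show "summable (\<lambda>n. real n ^ j * x ^ n)"
      using Suc.IH x by simp
    fix n assume "n \<ge> N"
    then have "real n * \<theta> ^ n < x ^ n"
      using N[of n] x by (simp add: power_divide field_simps)
    then have "real n ^ j * (real n * \<theta> ^ n) \<le> real n ^ j * x ^ n"
      by (intro mult_left_mono) auto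
    then show "norm (real n ^ Suc j * \<theta> ^ n) \<le> real n ^ j * x ^ n"
      using Suc.prems by (simp add: abs_mult mult_ac)
  qed
qed

lemma real_choose_le_power: "real (n choose j) \<le> real n ^ j"
  by (metis binomial_eq_0_iff binomial_le_pow not_le of_nat_le_iff of_nat_power zero_le)

lemma summable_choose_blk_pow:
  assumes "finite K" and sub: "substochastic_on K P" and "blk_is_inv K (I_minus P) R"
    and "i \<in> K" and "l \<in> K"
  shows "summable (\<lambda>n. real (n choose j) * blk_pow K P n i l)"
proof -
  obtain \<theta> where \<theta>: "0 \<le> \<theta>" "\<theta> < 1" and bound: "\<And>n. blk_pow K P n i l \<le> 2 * \<theta> ^ n"
    using blk_pow_geometric_bound[OF assms(1-3)] assms(4,5) by metis
  have nonneg: "0 \<le> blk_pow K P n i l" for n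
    using sub unfolding substochastic_on_def by (simp add: blk_pow_nonneg)
  show ?thesis
  proof (rule summable_comparison_test')
    show "summable (\<lambda>n. 2 * (real n ^ j * \<theta> ^ n))"
      by (intro summable_mult summable_poly_times_geometric \<theta>)
    fix n :: nat
    have "real (n choose j) * blk_pow K P n i l \<le> real n ^ j * (2 * \<theta> ^ n)"
      by (intro mult_mono real_choose_le_power bound nonneg) auto
    then show "norm (real (n choose j) * blk_pow K P n i l) \<le> 2 * (real n ^ j * \<theta> ^ n)"
      using nonneg[of n] by (simp add: mult_ac)
  qed
qed

lemma sums_choose_blk_pow_Suc:
  assumes "finite K" and "substochastic_on K P" and "blk_is_inv K (I_minus P) R" and "l \<in> K"
  shows "(\<lambda>n. real (n choose j) * blk_pow K P (Suc n) i l) sums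
           (\<Sum>k\<in>K. P i k * (\<Sum>n. real (n choose j) * blk_pow K P n k l))"
proof -
  have "(\<lambda>n. \<Sum>k\<in>K. P i k * (real (n choose j) * blk_pow K P n k l)) sums
          (\<Sum>k\<in>K. P i k * (\<Sum>n. real (n choose j) * blk_pow K P n k l))"
    by (intro sums_sum sums_mult summable_sums summable_choose_blk_pow[OF assms(1-3)] assms(4))
  then show ?thesis
    by (simp add: blk_mult_def sum_distrib_left mult_ac)
qed

lemma suminf_blk_pow_eq:
  assumes "finite K" and "substochastic_on K P" and "blk_is_inv K (I_minus P) R"
    and "i \<in> K" and "l \<in> K"
  shows "(\<Sum>n. blk_pow K P n i l) = idm i l + (\<Sum>k\<in>K. P i k * (\<Sum>n. blk_pow K P n k l))"
proof -
  have "summable (\<lambda>n. blk_pow K P n i l)"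
    using summable_choose_blk_pow[OF assms, of 0] by simp
  then have "(\<lambda>n. blk_pow K P (Suc n) i l) sums ((\<Sum>n. blk_pow K P n i l) - idm i l)"
    using sums_Suc_iff[of "\<lambda>n. blk_pow K P n i l"] by (simp add: summable_sums)
  moreover have "(\<lambda>n. blk_pow K P (Suc n) i l) sums (\<Sum>k\<in>K. P i k * (\<Sum>n. blk_pow K P n k l))"
    using sums_choose_blk_pow_Suc[OF assms(1-3,5), of 0 i] by simp
  ultimately show ?thesis
    using sums_unique2 by fastforce
qed

text \<open>Pascal's rule \<open>(n + 1 choose j + 1) = (n choose j) + (n choose j + 1)\<close>.\<close>

lemma suminf_choose_Suc_blk_pow_eq:
  assumes "finite K" and "substochastic_on K P" and "blk_is_inv K (I_minus P) R"
    and "i \<in> K" and "l \<in> K"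
  shows "(\<Sum>n. real (n choose Suc j) * blk_pow K P n i l)
       = (\<Sum>k\<in>K. P i k * (\<Sum>n. real (n choose j) * blk_pow K P n k l))
         + (\<Sum>k\<in>K. P i k * (\<Sum>n. real (n choose Suc j) * blk_pow K P n k l))"
proof -
  let ?f = "\<lambda>n. real (n choose Suc j) * blk_pow K P n i l"
  have "?f sums (\<Sum>n. ?f n)"
    using summable_choose_blk_pow[OF assms] by (rule summable_sums)
  then have "(\<lambda>n. ?f (Suc n)) sums (\<Sum>n. ?f n)"
    using sums_Suc_iff[of ?f] by simp
  moreover have "(\<lambda>n. ?f (Suc n)) sums
      ((\<Sum>k\<in>K. P i k * (\<Sum>n. real (n choose j) * blk_pow K P n k l))
       + (\<Sum>k\<in>K. P i k * (\<Sum>n. real (n choose Suc j) * blk_pow K P n k l)))"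
    using sums_add[OF sums_choose_blk_pow_Suc sums_choose_blk_pow_Suc, OF assms(1-3,5) assms(1-3,5)]
    by (simp add: distrib_right)
  ultimately show ?thesis
    using sums_unique2 by blast
qed

lemma sums_choose_blk_pow:
  assumes fin: "finite K" and sub: "substochastic_on K P" and inv: "blk_is_inv K (I_minus P) R"
    and "i \<in> K" and "l \<in> K"
  shows "(\<lambda>n. real (n choose j) * blk_pow K P n i l) sums
           blk_mult K (blk_pow K P j) (blk_pow K R (Suc j)) i l"
proof -
  have "(\<Sum>n. real (n choose j) * blk_pow K P n i l)
      = blk_mult K (blk_pow K P j) (blk_pow K R (Suc j)) i l"
    using assms(4,5)
  proof (induction j arbitrary: i l)
    case 0
    have "(\<Sum>n. blk_pow K P n i l) = (\<Sum>k\<in>K. R i k * idm k l)"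
      using suminf_blk_pow_eq[OF fin sub inv _ 0(2)] by (rule blk_is_inv_fixed_point[OF fin inv 0(1)])
    then show ?case
      using fin 0 by (simp add: blk_mult_idm_left blk_mult_idm_right sum_mult_idm)
  next
    case (Suc j)
    have "(\<Sum>n. real (n choose Suc j) * blk_pow K P n i l)
        = (\<Sum>k\<in>K. R i k * (\<Sum>k'\<in>K. P k k' * (\<Sum>n. real (n choose j) * blk_pow K P n k' l)))"
      using suminf_choose_Suc_blk_pow_eq[OF fin sub inv _ Suc.prems(2)]
      by (rule blk_is_inv_fixed_point[OF fin inv Suc.prems(1)])
    also have "\<dots> = blk_mult K R (blk_mult K P (blk_mult K (blk_pow K P j) (blk_pow K R (Suc j)))) i l"
      unfolding blk_mult_def[of K R] blk_mult_def[of K P] using Suc.IH Suc.prems by simp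
    also have "\<dots> = blk_mult K (blk_pow K P (Suc j)) (blk_pow K R (Suc (Suc j))) i l"
      by (rule blk_inv_mult_blk_pow_Suc[OF fin inv Suc.prems])
    finally show ?case .
  qed
  then show ?thesis
    using summable_sums[OF summable_choose_blk_pow[OF assms, of j]] by simp
qed

lemma sums_shifted_power_blk_pow:
  assumes "finite K" and "substochastic_on K P" and "blk_is_inv K (I_minus P) R"
    and "i \<in> K" and "l \<in> K"
  shows "(\<lambda>n. (real n + c) ^ m * blk_pow K P n i l) sums
           (\<Sum>k = 0..m. mgs m k c * blk_mult K (blk_pow K P k) (blk_pow K R (Suc k)) i l)"
proof -
  have "(\<lambda>n. \<Sum>k = 0..m. mgs m k c * (real (n choose k) * blk_pow K P n i l)) sums
          (\<Sum>k = 0..m. mgs m k c * blk_mult K (blk_pow K P k) (blk_pow K R (Suc k)) i l)"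
    by (intro sums_sum sums_mult sums_choose_blk_pow assms)
  then show ?thesis
    by (simp add: power_eq_sum_mgs_choose sum_distrib_left sum_distrib_right mult_ac)
qed

section \<open>First entrance probabilities\<close>

lemma visits_0: "visits A i xs 0 = 0"
  unfolding visits_def by simp

lemma visits_Suc:
  "visits A i xs (Suc r) = visits A i xs r + (if (i # xs) ! Suc r \<in> A then 1 else 0)"
proof -
  have "{t \<in> {1..Suc r}. (i # xs) ! t \<in> A}
      = {t \<in> {1..r}. (i # xs) ! t \<in> A} \<union> (if (i # xs) ! Suc r \<in> A then {Suc r} else {})"
    by (auto simp: le_Suc_eq)
  then show ?thesis
    unfolding visits_def by simp
qed

lemma visits_eq_0_iff: "visits A i xs r = 0 \<longleftrightarrow> (\<forall>t\<in>{1..r}. (i # xs) ! t \<notin> A)"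
  unfolding visits_def by auto

lemma tau_eq_Suc_iff:
  "tau_eq A i xs (Suc k) \<longleftrightarrow> (\<forall>t\<in>{1..k}. (i # xs) ! t \<notin> A) \<and> (i # xs) ! Suc k \<in> A"
proof
  assume tau: "tau_eq A i xs (Suc k)"
  have "visits A i xs r = 0" if "r \<le> k" for r
    using that
  proof (induction r)
    case 0
    show ?case by (rule visits_0)
  next
    case (Suc r)
    then have "visits A i xs (Suc r) \<noteq> 1"
      using tau unfolding tau_eq_def by simp
    then show ?case
      using Suc by (simp add: visits_Suc split: if_splits)
  qed
  then have none: "visits A i xs k = 0"
    by simp
  moreover have "visits A i xs (Suc k) = 1"
    using tau unfolding tau_eq_def by simp
  ultimately have "(i # xs) ! Suc k \<in> A"
    by (simp add: visits_Suc split: if_splits)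
  then show "(\<forall>t\<in>{1..k}. (i # xs) ! t \<notin> A) \<and> (i # xs) ! Suc k \<in> A"
    using none by (simp only: visits_eq_0_iff)
next
  assume entrance: "(\<forall>t\<in>{1..k}. (i # xs) ! t \<notin> A) \<and> (i # xs) ! Suc k \<in> A"
  then have "visits A i xs r = 0" if "r \<le> k" for r
    using that by (auto simp: visits_eq_0_iff)
  then show "tau_eq A i xs (Suc k)"
    using entrance unfolding tau_eq_def by (auto simp: visits_Suc less_Suc_eq_le)
qed

lemma ball_atLeastAtMost_1_Suc: "(\<forall>t\<in>{1..Suc k}. Q t) \<longleftrightarrow> Q 1 \<and> (\<forall>t\<in>{1..k}. Q (Suc t))"
proof -
  have "{1..Suc k} = insert 1 (Suc ` {1..k})"
    by (auto simp: image_iff)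
  then show ?thesis
    by (simp only: ball_simps)
qed

lemma tau_eq_Cons_Suc_Suc_iff:
  "tau_eq A i (y # zs) (Suc (Suc k)) \<longleftrightarrow> y \<notin> A \<and> tau_eq A y zs (Suc k)"
  unfolding tau_eq_Suc_iff ball_atLeastAtMost_1_Suc by simp

lemma path_prob_Cons: "path_prob P i (y # zs) = P i y * path_prob P y zs"
  unfolding path_prob_def by (simp only: length_Cons prod.lessThan_Suc_shift) simp

lemma sum_lists_length_Suc:
  "(\<Sum>xs\<in>{xs :: 'a::finite list. length xs = Suc n}. f xs)
     = (\<Sum>y\<in>UNIV. \<Sum>zs\<in>{zs. length zs = n}. f (y # zs))"
proof -
  have "{xs :: 'a list. length xs = Suc n} = (\<lambda>(y, zs). y # zs) ` (UNIV \<times> {zs. length zs = n})"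
    by (auto simp: length_Suc_conv)
  then show ?thesis
    by (simp add: sum.reindex inj_on_def sum.cartesian_product split_def)
qed

lemma first_prob_0: "first_prob P A i j 0 = 0"
  unfolding first_prob_def tau_eq_def by simp

lemma first_prob_Suc_0: "first_prob P A i j (Suc 0) = (if j \<in> A then P i j else 0)"
proof -
  have "first_prob P A i j (Suc 0) = (\<Sum>y\<in>UNIV. if y = j then (if j \<in> A then P i j else 0) else 0)"
    unfolding first_prob_def sum_lists_length_Suc
    by (intro sum.cong) (auto simp: tau_eq_Suc_iff path_prob_def)
  then show ?thesis
    by simp
qed

lemma first_prob_Suc_Suc:
  "first_prob P A i j (Suc (Suc k)) = (\<Sum>y\<in>- A. P i y * first_prob P A y j (Suc k))"
proof -
  have "first_prob P A i j (Suc (Suc k))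
      = (\<Sum>y\<in>UNIV. if y \<in> - A then P i y * first_prob P A y j (Suc k) else 0)"
    unfolding first_prob_def sum_lists_length_Suc[where n = "Suc k"]
    by (intro sum.cong refl)
      (auto simp: tau_eq_Cons_Suc_Suc_iff path_prob_Cons sum_distrib_left intro!: sum.cong)
  then show ?thesis
    by (simp add: sum.If_cases Compl_eq)
qed

lemma first_prob_Suc_eq_blk_pow:
  fixes P :: "'s::finite \<Rightarrow> 's \<Rightarrow> real"
  assumes "i \<in> K" and "j \<in> - K"
  shows "first_prob P (- K) i j (Suc k) = blk_mult K (blk_pow K P k) P i j"
  using assms(1)
proof (induction k arbitrary: i)
  case 0
  then show ?case using assms(2) by (simp add: first_prob_Suc_0 blk_mult_idm_left)
next
  case (Suc k)
  have "first_prob P (- K) i j (Suc (Suc k)) = (\<Sum>y\<in>K. P i y * blk_mult K (blk_pow K P k) P y j)"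
    by (simp add: first_prob_Suc_Suc Suc.IH)
  also have "\<dots> = blk_mult K (blk_pow K P (Suc k)) P i j"
    by (simp add: blk_mult_assoc) (simp add: blk_mult_def)
  finally show ?case .
qed

lemma first_prob_shifted_moments:
  fixes P :: "'s::finite \<Rightarrow> 's \<Rightarrow> real"
  assumes st: "stochastic P" and inv: "blk_invertible K (I_minus P)"
    and i: "i \<in> K" and j: "j \<in> - K"
  shows "(\<lambda>n. (real n + c) ^ m * first_prob P (- K) i j (Suc n)) sums
    (\<Sum>k = 0..m. mgs m k c *
       blk_mult K (blk_mult K (blk_pow K P k) (blk_pow K (blk_inv K (I_minus P)) (k + 1))) P i j)"
proof -
  let ?R = "blk_inv K (I_minus P)"
  have "(\<lambda>n. \<Sum>l\<in>K. ((real n + c) ^ m * blk_pow K P n i l) * P l j) sums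
      (\<Sum>l\<in>K. (\<Sum>k = 0..m. mgs m k c * blk_mult K (blk_pow K P k) (blk_pow K ?R (Suc k)) i l) * P l j)"
    by (intro sums_sum sums_mult2 sums_shifted_power_blk_pow i finite
        stochastic_imp_substochastic_on[OF st] blk_is_inv_blk_inv[OF inv])
  then show ?thesis
    using i j
    by (simp add: first_prob_Suc_eq_blk_pow blk_mult_def[of K _ P] sum_distrib_left
        sum_distrib_right mult_ac sum.swap[of _ K "{0..m}"])
qed

lemma first_passage_moments:
  fixes P :: "'s::finite \<Rightarrow> 's \<Rightarrow> real"
  assumes "stochastic P" and "blk_invertible K (I_minus P)" and "i \<in> K" and "j \<in> - K"
  shows "(\<lambda>n. real n ^ m * first_prob P (- K) i j n) sums
    (\<Sum>k = 0..m. mgs m k 1 *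
       blk_mult K (blk_mult K (blk_pow K P k) (blk_pow K (blk_inv K (I_minus P)) (k + 1))) P i j)"
  using first_prob_shifted_moments[OF assms, of 1 m]
    sums_Suc_iff[of "\<lambda>n. real n ^ m * first_prob P (- K) i j n"]
  by (simp add: first_prob_0 add.commute)

lemma recurrence_moments:
  fixes P :: "'s::finite \<Rightarrow> 's \<Rightarrow> real"
  assumes st: "stochastic P" and inv: "blk_invertible (- A) (I_minus P)" and j: "j \<in> A"
  shows "(\<lambda>n. real n ^ m * first_prob P A i j n) sums
    (P i j + (\<Sum>l\<in>- A. P i l *
       (\<Sum>k = 0..m. mgs m k 2 *
          blk_mult (- A) (blk_mult (- A) (blk_pow (- A) P k)
             (blk_pow (- A) (blk_inv (- A) (I_minus P)) (k + 1))) P l j)))"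
    (is "?f sums (P i j + (\<Sum>l\<in>- A. P i l * ?S l))")
proof -
  have "(\<lambda>n. (real n + 2) ^ m * first_prob P A l j (Suc n)) sums ?S l" if "l \<in> - A" for l
    using first_prob_shifted_moments[OF st inv that, of j 2 m] j by simp
  then have "(\<lambda>n. \<Sum>l\<in>- A. P i l * ((real n + 2) ^ m * first_prob P A l j (Suc n))) sums
      (\<Sum>l\<in>- A. P i l * ?S l)"
    by (intro sums_sum sums_mult)
  then have "(\<lambda>n. ?f (Suc (Suc n))) sums (\<Sum>l\<in>- A. P i l * ?S l)"
    by (simp add: first_prob_Suc_Suc sum_distrib_left mult_ac add.commute)
  then show ?thesis
    using sums_Suc_iff[of "\<lambda>n. ?f (Suc n)"] sums_Suc_iff[of ?f] j
    by (simp add: first_prob_0 first_prob_Suc_0 add.commute)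
qed

theorem mainTheorem1:
  fixes P :: "'s::finite \<Rightarrow> 's \<Rightarrow> real" and M :: "'s set" and m :: nat
  assumes "stochastic P"
    and "M \<noteq> {}" and "- M \<noteq> {}"
    and "blk_invertible M (I_minus P)"
    and "blk_invertible (- M) (I_minus P)"
  shows "(\<forall>i\<in>M. \<forall>j\<in>- M.
           (\<lambda>n. real n ^ m * first_prob P (- M) i j n) sums
           (\<Sum>k = 0..m. mgs m k 1 *
              blk_mult M (blk_mult M (blk_pow M P k) (blk_pow M (blk_inv M (I_minus P)) (k + 1))) P i j))
       \<and> (\<forall>i\<in>M. \<forall>j\<in>M.
           (\<lambda>n. real n ^ m * first_prob P M i j n) sums
           (P i j + (\<Sum>l\<in>- M. P i l *
              (\<Sum>k = 0..m. mgs m k 2 *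
                 blk_mult (- M) (blk_mult (- M) (blk_pow (- M) P k)
                    (blk_pow (- M) (blk_inv (- M) (I_minus P)) (k + 1))) P l j))))"
  using first_passage_moments[OF assms(1,4)] recurrence_moments[OF assms(1,5)] by blast

end
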